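(* Let $f:\mathbb{R}^\ell\times\mathbb{R}^m\to\mathbb{R}^\ell$ be $C^1$, let $\Lambda$ be a parameter shift with limits $\lambda_\pm$, and let $X$ define a stable path. Let $N\in\mathbb{N}$ be such that $\|[D_xf(X(s),\Lambda(s))]^n\|<\frac14$ for all $s\in\mathbb{R}$ and all $n\ge N$. Then for all sufficiently small $\epsilon>0$, $F_0^n(\mathcal{N}_\epsilon)\subset\mathcal{N}_{\epsilon/3}$ for all $n\in\{N,N+1,\ldots,N(N+1)\}$.
   Context: A parameter shift is a $C^1$ function $\Lambda:\mathbb{R}\to\mathbb{R}^m$ with $\lim_{s\to\pm\infty}\Lambda(s)=\lambda_\pm$ and $\lim_{s\to\pm\infty}\Lambda'(s)=0$. A stable path is given by $X:\mathbb{R}\to\mathbb{R}^\ell$ such that: $X(s)$ is a fixed point of $f(\cdot,\Lambda(s))$ for every $s$; $\{(s,X(s))\}$ is a connected curve; the limits $X_\pm=\lim_{s\to\pm\infty}X(s)$ exist and are fixed points of $f(\cdot,\lambda_\pm)$; and the spectral radius of $D_xf(X(s),\Lambda(s))$ is $<1$ for all $s\in\mathbb{R}\cup\{\pm\infty\}$ (with $X(\pm\infty)=X_\pm$, $\Lambda(\pm\infty)=\lambda_\pm$). For $r\ge0$, $F_r:\mathbb{R}^{\ell+1}\to\mathbb{R}^{\ell+1}$ is $F_r(s,x)=(s+r,f(x,\Lambda(s)))$, and $F_r^n$ is its $n$-fold composition. For $\epsilon>0$, $\mathcal{N}_\epsilon=\{(s,x):s\in\mathbb{R},\ \|x-X(s)\|\le\epsilon\}$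 (Euclidean norm; matrix norms are the induced norms). *)

theory Defs
  imports "HOL-Analysis.Analysis"
begin

definition C1_joint :: "('a::euclidean_space \<Rightarrow> 'b::euclidean_space \<Rightarrow> 'c::euclidean_space) \<Rightarrow> bool" where
  "C1_joint f \<longleftrightarrow> (\<exists>D :: 'a \<times> 'b \<Rightarrow> ('a \<times> 'b) \<Rightarrow>\<^sub>L 'c.
      (\<forall>z. ((\<lambda>(x, p). f x p) has_derivative blinfun_apply (D z)) (at z)) \<and> continuous_on UNIV D)"

definition Dx :: "('a::real_normed_vector \<Rightarrow> 'b \<Rightarrow> 'a) \<Rightarrow> 'a \<Rightarrow> 'b \<Rightarrow> ('a \<Rightarrow> 'a)" where
  "Dx f x p = frechet_derivative (\<lambda>y. f y p) (at x)"

definition is_eigenvalue :: "(real^'l \<Rightarrow> real^'l) \<Rightarrow> complex \<Rightarrow> bool" where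
  "is_eigenvalue L \<mu> \<longleftrightarrow> (\<exists>v :: complex^'l. v \<noteq> 0 \<and>
      (\<chi> i j. complex_of_real (matrix L $ i $ j)) *v v = \<mu> *s v)"

definition spec_rad :: "(real^'l \<Rightarrow> real^'l) \<Rightarrow> real" where
  "spec_rad L = Sup (cmod ` {\<mu>. is_eigenvalue L \<mu>})"

definition parameter_shift :: "(real \<Rightarrow> real^'m) \<Rightarrow> real^'m \<Rightarrow> real^'m \<Rightarrow> bool" where
  "parameter_shift \<Lambda> lm lp \<longleftrightarrow> \<Lambda> C1_differentiable_on UNIV \<and>
     (\<Lambda> \<longlongrightarrow> lm) at_bot \<and> (\<Lambda> \<longlongrightarrow> lp) at_top \<and>
     ((\<lambda>s. vector_derivative \<Lambda> (at s)) \<longlongrightarrow> 0) at_bot \<and>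
     ((\<lambda>s. vector_derivative \<Lambda> (at s)) \<longlongrightarrow> 0) at_top"

definition stable_path ::
  "(real^'l \<Rightarrow> real^'m \<Rightarrow> real^'l) \<Rightarrow> (real \<Rightarrow> real^'m) \<Rightarrow> real^'m \<Rightarrow> real^'m
     \<Rightarrow> (real \<Rightarrow> real^'l) \<Rightarrow> real^'l \<Rightarrow> real^'l \<Rightarrow> bool" where
  "stable_path f \<Lambda> lm lp X Xm Xp \<longleftrightarrow>
     (\<forall>s. f (X s) (\<Lambda> s) = X s) \<and>
     connected {(s, X s) | s. True} \<and>
     (X \<longlongrightarrow> Xm) at_bot \<and> (X \<longlongrightarrow> Xp) at_top \<and>
     f Xm lm = Xm \<and> f Xp lp = Xp \<and>
     (\<forall>s. spec_rad (Dx f (X s) (\<Lambda> s)) < 1) \<and>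
     spec_rad (Dx f Xm lm) < 1 \<and> spec_rad (Dx f Xp lp) < 1"

definition Fmap :: "(real^'l \<Rightarrow> real^'m \<Rightarrow> real^'l) \<Rightarrow> (real \<Rightarrow> real^'m) \<Rightarrow> real
     \<Rightarrow> (real \<times> (real^'l)) \<Rightarrow> (real \<times> (real^'l))" where
  "Fmap f \<Lambda> r = (\<lambda>(s, x). (s + r, f x (\<Lambda> s)))"

definition nbhd :: "(real \<Rightarrow> real^'l) \<Rightarrow> real \<Rightarrow> (real \<times> (real^'l)) set" where
  "nbhd X \<epsilon> = {(s, x). norm (x - X s) \<le> \<epsilon>}"

end

(*
  Write A s for D_x f (X s, Lambda s). Since the path (X s, Lambda s) is bounded and D_x f is
  uniformly continuous on compact sets, f (., Lambda s) is linearised by A s near X s with an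
  error kappa * |v| that is uniform in s; iterating, F_0^n differs from A s ^ n by at most
  kappa * n * (B + 1)^n * |v| on a small enough neighbourhood, where B bounds |A s|. For the
  finitely many n <= N (N + 1) this is below |v| / 12 once kappa is small, and |A s ^ n| <= 1/4
  gives |F_0^n (s, X s + v) - X s| <= |v| / 3.

  Boundedness of the path needs continuity of X, which the definition of a stable path does not
  provide. It follows from connectedness of the graph of X: as 1 is not an eigenvalue of A s,
  fixed points of f (., p) near X s0 are within O(|f (X s0, p) - X s0|) of X s0, so near s0 the
  graph avoids a small sphere around X s0 and cannot jump across it.
*)
theory Submission
  imports Defs
begin

lemma connected_graph_avoiding_sphere_right:
  fixes Y :: "real \<Rightarrow> 'a::metric_space"
  assumes conn: "connected (range (\<lambda>s. (s, Y s)))" and r: "r > 0"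
    and gap: "\<forall>s. \<bar>s - s0\<bar> < \<delta> \<longrightarrow> dist (Y s) (Y s0) \<noteq> r"
    and s1: "s0 < s1" "s1 < s0 + \<delta>"
  shows "dist (Y s1) (Y s0) < r"
proof (rule ccontr)
  assume "\<not> ?thesis"
  moreover have "dist (Y s1) (Y s0) \<noteq> r" using gap s1 by simp
  ultimately have far: "dist (Y s1) (Y s0) > r" by simp
  define U where "U = {z::real \<times> 'a. fst z < s0} \<union> {z. fst z < s1 \<and> dist (snd z) (Y s0) < r}"
  define V where "V = {z::real \<times> 'a. fst z > s0 \<and> dist (snd z) (Y s0) > r} \<union> {z. fst z > s1}"
  have "open U" unfolding U_def
    by (intro open_Un open_Collect_less open_Collect_conj continuous_intros)
  moreover have "open V" unfolding V_def
    by (intro open_Un open_Collect_less open_Collect_conj continuous_intros)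
  moreover have "U \<inter> V \<inter> range (\<lambda>s. (s, Y s)) = {}" unfolding U_def V_def using s1 by auto
  moreover have "(s, Y s) \<in> U \<union> V" for s
  proof -
    consider "s < s0" | "s = s0" | "s0 < s" "s < s1" | "s = s1" | "s1 < s" by linarith
    then show ?thesis
    proof cases
      case 3
      then have "dist (Y s) (Y s0) \<noteq> r" using gap s1 by simp
      then show ?thesis using 3 unfolding U_def V_def by (cases "dist (Y s) (Y s0) < r") auto
    next
      case 1 then show ?thesis unfolding U_def by simp
    next
      case 2 then show ?thesis using r s1 unfolding U_def by simp
    next
      case 4 then show ?thesis using far s1 unfolding V_def by simp
    next
      case 5 then show ?thesis unfolding V_def by simp
    qed
  qed
  moreover have "(s0, Y s0) \<in> U" "(s1, Y s1) \<in> V" using r s1 far unfolding U_def V_def by auto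
  ultimately show False using connectedD[OF conn, of U V] by fast
qed

lemma connected_graph_avoiding_sphere:
  fixes Y :: "real \<Rightarrow> 'a::metric_space"
  assumes conn: "connected (range (\<lambda>s. (s, Y s)))" and r: "r > 0"
    and gap: "\<forall>s. \<bar>s - s0\<bar> < \<delta> \<longrightarrow> dist (Y s) (Y s0) \<noteq> r"
    and s: "\<bar>s - s0\<bar> < \<delta>"
  shows "dist (Y s) (Y s0) < r"
proof -
  consider "s = s0" | "s0 < s" | "s < s0" by linarith
  then show ?thesis
  proof cases
    case 1
    then show ?thesis using r by simp
  next
    case 2
    then show ?thesis using connected_graph_avoiding_sphere_right[OF conn r gap] s by simp
  next
    case 3
    have "(\<lambda>t. (t, Y (- t))) = (\<lambda>z. (- fst z, snd z)) \<circ> (\<lambda>t. (t, Y t)) \<circ> uminus"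
      by (simp add: o_def)
    then have "range (\<lambda>t. (t, Y (- t))) = (\<lambda>z. (- fst z, snd z)) ` range (\<lambda>t. (t, Y t))"
      by (simp only: image_comp[symmetric] surj_uminus)
    moreover have "continuous_on (range (\<lambda>t. (t, Y t))) (\<lambda>z::real \<times> 'a. (- fst z, snd z))"
      by (intro continuous_intros)
    ultimately have "connected (range (\<lambda>t. (t, Y (- t))))"
      using connected_continuous_image[OF _ conn] by metis
    moreover have "\<forall>t. \<bar>t - - s0\<bar> < \<delta> \<longrightarrow> dist (Y (- t)) (Y (- (- s0))) \<noteq> r"
    proof (intro allI impI)
      fix t :: real assume "\<bar>t - - s0\<bar> < \<delta>"
      then have "\<bar>- t - s0\<bar> < \<delta>" by arith
      then show "dist (Y (- t)) (Y (- (- s0))) \<noteq> r" using gap by simp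
    qed
    ultimately show ?thesis
      using connected_graph_avoiding_sphere_right[of "\<lambda>t. Y (- t)" r "- s0" \<delta> "- s"] r s 3 by simp
  qed
qed

lemma isCont_if_connected_graph:
  fixes Y :: "real \<Rightarrow> 'a::metric_space"
  assumes conn: "connected (range (\<lambda>s. (s, Y s)))" and r: "r > 0"
    and \<phi>: "(\<phi> \<longlongrightarrow> 0) (at s0)"
    and near: "\<forall>\<^sub>F s in at s0. dist (Y s) (Y s0) \<le> r \<longrightarrow> dist (Y s) (Y s0) \<le> \<phi> s"
  shows "isCont Y s0"
proof -
  have "\<forall>\<^sub>F s in at s0. \<phi> s < r" using \<phi> r by (rule order_tendstoD)
  with near have "\<forall>\<^sub>F s in at s0. dist (Y s) (Y s0) \<noteq> r"
    by eventually_elim auto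
  then obtain \<delta> where "\<delta> > 0" and "\<forall>s. s \<noteq> s0 \<and> dist s s0 < \<delta> \<longrightarrow> dist (Y s) (Y s0) \<noteq> r"
    by (auto simp: eventually_at)
  then have gap: "\<forall>s. \<bar>s - s0\<bar> < \<delta> \<longrightarrow> dist (Y s) (Y s0) \<noteq> r"
    using r by (auto simp: dist_real_def)
  have "\<forall>\<^sub>F s in at s0. dist (Y s) (Y s0) < r"
    unfolding eventually_at
  proof (intro exI[of _ \<delta>] conjI allI ballI impI)
    fix s assume "s \<noteq> s0 \<and> dist s s0 < \<delta>"
    then show "dist (Y s) (Y s0) < r"
      using connected_graph_avoiding_sphere[OF conn r gap] by (simp add: dist_real_def)
  qed (fact \<open>\<delta> > 0\<close>)
  with near have "\<forall>\<^sub>F s in at s0. norm (dist (Y s) (Y s0)) \<le> \<phi> s"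
    by eventually_elim auto
  then have "((\<lambda>s. dist (Y s) (Y s0)) \<longlongrightarrow> 0) (at s0)"
    using \<phi> by (rule Lim_null_comparison)
  then show ?thesis
    unfolding isCont_def by (rule tendsto_dist_iff[THEN iffD2])
qed

lemma bounded_range_if_tendsto_at_bot_at_top:
  fixes h :: "real \<Rightarrow> 'a::metric_space"
  assumes cont: "continuous_on UNIV h" and "(h \<longlongrightarrow> a) at_bot" "(h \<longlongrightarrow> b) at_top"
  shows "bounded (range h)"
proof -
  obtain S where S: "\<And>s. s \<le> S \<Longrightarrow> dist (h s) a < 1"
    using tendstoD[OF assms(2), of 1] by (auto simp: eventually_at_bot_linorder)
  obtain T where T: "\<And>s. s \<ge> T \<Longrightarrow> dist (h s) b < 1"
    using tendstoD[OF assms(3), of 1] by (auto simp: eventually_at_top_linorder)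
  have "h s \<in> ball a 1 \<union> ball b 1 \<union> h ` {S..T}" for s
    using S[of s] T[of s] by (cases "s \<le> S \<or> s \<ge> T") (auto simp: dist_commute)
  then have "range h \<subseteq> ball a 1 \<union> ball b 1 \<union> h ` {S..T}" by blast
  moreover have "bounded (h ` {S..T})"
    by (intro compact_imp_bounded compact_continuous_image continuous_on_subset[OF cont]) auto
  ultimately show ?thesis by (meson bounded_Un bounded_ball bounded_subset)
qed

lemma linearization_error_bound:
  fixes h :: "'a::real_normed_vector \<Rightarrow> 'b::real_normed_vector"
  assumes der: "\<And>y. y \<in> cball x0 r \<Longrightarrow> (h has_derivative blinfun_apply (D y)) (at y)"
    and close: "\<And>y. y \<in> cball x0 r \<Longrightarrow> norm (D y - A) \<le> \<kappa>"
    and e: "norm e \<le> r"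
  shows "norm (h (x0 + e) - h x0 - A e) \<le> \<kappa> * norm e"
proof -
  define g where "g y = h y - A y" for y
  have "norm (g (x0 + e) - g x0) \<le> \<kappa> * norm ((x0 + e) - x0)"
  proof (rule differentiable_bound[where S="cball x0 r" and f'="\<lambda>y. blinfun_apply (D y - A)"])
    show "(g has_derivative blinfun_apply (D y - A)) (at y within cball x0 r)"
      if "y \<in> cball x0 r" for y
    proof -
      have "blinfun_apply (D y - A) = (\<lambda>v. D y v - A v)"
        by (rule ext) (simp add: blinfun.diff_left)
      moreover have "(g has_derivative (\<lambda>v. D y v - A v)) (at y)"
        unfolding g_def using der[OF that] by (auto intro!: derivative_eq_intros)
      ultimately show ?thesis
        by (simp add: has_derivative_at_withinI)
    qed
    show "onorm (blinfun_apply (D y - A)) \<le> \<kappa>" if "y \<in> cball x0 r" for y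
      using close[OF that] by (simp add: norm_blinfun.rep_eq[symmetric])
    show "x0 + e \<in> cball x0 r" "x0 \<in> cball x0 r"
      using e norm_ge_zero[of e] by (simp_all add: dist_norm del: norm_ge_zero)
  qed simp
  then show ?thesis
    unfolding g_def by (simp add: blinfun.add_right algebra_simps)
qed

lemma uniform_partial_linearization:
  fixes f :: "'a::euclidean_space \<Rightarrow> 'b::euclidean_space \<Rightarrow> 'c::real_normed_vector"
  assumes der: "\<And>x p. ((\<lambda>y. f y p) has_derivative blinfun_apply (D (x, p))) (at x)"
    and cont: "continuous_on UNIV D" and K: "compact K" and \<kappa>: "\<kappa> > 0"
  obtains r where "r > 0"
    and "\<And>x p q e. (x, p) \<in> K \<Longrightarrow> dist q p < r \<Longrightarrow> norm e \<le> r \<Longrightarrow>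
           norm (f (x + e) q - f x q - D (x, p) e) \<le> \<kappa> * norm e"
proof -
  define K' where "K' = {z + w | z w. z \<in> K \<and> w \<in> cball 0 1}"
  have "compact K'"
    unfolding K'_def using K by (intro compact_sums) auto
  then have "uniformly_continuous_on K' D"
    using cont by (intro compact_uniformly_continuous) (auto intro: continuous_on_subset)
  then obtain d where d: "d > 0" "\<forall>z\<in>K'. \<forall>z'\<in>K'. dist z' z < d \<longrightarrow> dist (D z') (D z) < \<kappa>"
    using \<kappa> unfolding uniformly_continuous_on_def by metis
  define r where "r = min (1/2) (d/2)"
  have "r > 0" using d by (simp add: r_def)
  moreover have "norm (f (x + e) q - f x q - D (x, p) e) \<le> \<kappa> * norm e"
    if xp: "(x, p) \<in> K" and q: "dist q p < r" and e: "norm e \<le> r" for x p q e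
  proof (rule linearization_error_bound[where D="\<lambda>y. D (y, q)" and r=r])
    fix y assume y: "y \<in> cball x r"
    have yq: "norm (y - x, q - p) < 2 * r"
      using norm_Pair_le[of "y - x" "q - p"] y q by (simp add: dist_norm norm_minus_commute)
    have "(y, q) = (x, p) + (y - x, q - p)" by simp
    moreover have "(y - x, q - p) \<in> cball 0 1"
      using yq unfolding mem_cball_0 r_def by linarith
    ultimately have "(y, q) \<in> K'" using xp unfolding K'_def by blast
    moreover have "(x, p) \<in> K'" using xp unfolding K'_def by force
    moreover have "dist (y, q) (x, p) < d" using yq by (simp add: dist_norm r_def)
    ultimately show "norm (D (y, q) - D (x, p)) \<le> \<kappa>"
      using d(2) by (fastforce simp: dist_norm)
  qed (use der e in auto)
  ultimately show thesis using that by blast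
qed

lemma uniform_linearization_at_fixed_points:
  fixes f :: "'a::euclidean_space \<Rightarrow> 'b::euclidean_space \<Rightarrow> 'a"
  assumes der: "\<And>x p. ((\<lambda>y. f y p) has_derivative blinfun_apply (D (x, p))) (at x)"
    and cont: "continuous_on UNIV D"
    and bdd: "bounded (range (\<lambda>i. (x i, p i)))"
    and fixed: "\<And>i. f (x i) (p i) = x i"
    and \<kappa>: "\<kappa> > 0"
  shows "\<exists>r>0. \<forall>i e. norm e \<le> r \<longrightarrow> norm (f (x i + e) (p i) - x i - D (x i, p i) e) \<le> \<kappa> * norm e"
proof -
  have "compact (closure (range (\<lambda>i. (x i, p i))))"
    using bdd by (simp add: compact_closure)
  from uniform_partial_linearization[OF der cont this \<kappa>]
  obtain r where "r > 0" and r: "\<And>y q q' e. (y, q) \<in> closure (range (\<lambda>i. (x i, p i))) \<Longrightarrow>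
      dist q' q < r \<Longrightarrow> norm e \<le> r \<Longrightarrow> norm (f (y + e) q' - f y q' - D (y, q) e) \<le> \<kappa> * norm e"
    by blast
  have "norm (f (x i + e) (p i) - x i - D (x i, p i) e) \<le> \<kappa> * norm e" if "norm e \<le> r" for i e
  proof -
    have "(x i, p i) \<in> closure (range (\<lambda>i. (x i, p i)))"
      by (rule closure_subset[THEN subsetD]) simp
    with r[of "x i" "p i" "p i" e] \<open>r > 0\<close> that show ?thesis
      using fixed[of i] by simp
  qed
  with \<open>r > 0\<close> show ?thesis by blast
qed

lemma C1_joint_partial_derivative:
  fixes f :: "'a::euclidean_space \<Rightarrow> 'b::euclidean_space \<Rightarrow> 'a"
  assumes "C1_joint f"
  obtains D :: "'a \<times> 'b \<Rightarrow> 'a \<Rightarrow>\<^sub>L 'a" where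
    "\<And>x p. ((\<lambda>y. f y p) has_derivative blinfun_apply (D (x, p))) (at x)"
    "\<And>x p. Dx f x p = blinfun_apply (D (x, p))"
    "continuous_on UNIV D"
    "continuous_on UNIV (\<lambda>(x, p). f x p)"
proof -
  obtain J :: "'a \<times> 'b \<Rightarrow> ('a \<times> 'b) \<Rightarrow>\<^sub>L 'a" where
    J: "\<And>z. ((\<lambda>(x, p). f x p) has_derivative blinfun_apply (J z)) (at z)"
    and cont: "continuous_on UNIV J"
    using assms unfolding C1_joint_def by blast
  define E :: "'a \<Rightarrow>\<^sub>L ('a \<times> 'b)" where "E = Blinfun (\<lambda>h. (h, 0))"
  have E: "blinfun_apply E = (\<lambda>h. (h, 0))"
    unfolding E_def by (intro bounded_linear_Blinfun_apply bounded_linear_Pair bounded_linear_ident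
      bounded_linear_zero)
  define D where "D z = J z o\<^sub>L E" for z
  have der: "((\<lambda>y. f y p) has_derivative blinfun_apply (D (x, p))) (at x)" for x p
  proof -
    have "((\<lambda>y. (y, p)) has_derivative (\<lambda>h. (h, 0))) (at x)"
      by (auto intro!: derivative_eq_intros)
    moreover have "blinfun_apply (D (x, p)) = (\<lambda>h. J (x, p) (h, 0))"
      by (rule ext) (simp add: D_def E)
    ultimately show ?thesis
      using has_derivative_compose[OF _ J] by fastforce
  qed
  show thesis
  proof
    show "Dx f x p = blinfun_apply (D (x, p))" for x p
      unfolding Dx_def by (rule frechet_derivative_at[OF der, symmetric])
    show "continuous_on UNIV D" unfolding D_def
      by (intro bounded_bilinear.continuous_on[OF bounded_bilinear_blinfun_compose] cont
        continuous_on_const)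
    show "continuous_on UNIV (\<lambda>(x, p). f x p)"
      by (intro continuous_at_imp_continuous_on ballI has_derivative_continuous[OF J])
  qed (fact der)
qed

lemma id_minus_blinfun_bounded_below:
  fixes A :: "'a::euclidean_space \<Rightarrow>\<^sub>L 'a"
  assumes no_fixed: "\<And>v. A v = v \<Longrightarrow> v = 0"
  obtains m where "m > 0" "\<And>v. m * norm v \<le> norm (v - A v)"
proof -
  have "linear (\<lambda>v. v - A v)"
    by (intro bounded_linear.linear bounded_linear_sub bounded_linear_ident
      blinfun.bounded_linear_right)
  moreover have "inj (\<lambda>v. v - A v)"
  proof (rule injI)
    fix u v assume "u - A u = v - A v"
    then have "A (u - v) = u - v" by (simp add: blinfun.diff_right algebra_simps)
    then show "u = v" using no_fixed by fastforce
  qed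
  ultimately show thesis using linear_inj_bounded_below_pos that by blast
qed

lemma fixed_point_displacement_bound:
  fixes g A :: "'a::real_normed_vector \<Rightarrow> 'a"
  assumes m: "m > 0" "\<And>v. m * norm v \<le> norm (v - A v)"
    and lin: "norm (g (x0 + v) - g x0 - A v) \<le> m / 2 * norm v"
    and fixed: "g (x0 + v) = x0 + v"
  shows "norm v \<le> 2 / m * norm (g x0 - x0)"
proof -
  have "v - A v = (g (x0 + v) - g x0 - A v) + (g x0 - x0)"
    using fixed by (simp add: algebra_simps)
  then have "norm (v - A v) \<le> norm (g (x0 + v) - g x0 - A v) + norm (g x0 - x0)"
    by (metis norm_triangle_ineq)
  with lin m(2)[of v] have "m / 2 * norm v \<le> norm (g x0 - x0)"
    by linarith
  then show ?thesis using m(1) by (simp add: field_simps)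
qed

lemma fixed_points_near_nondegenerate_fixed_point:
  fixes f :: "'a::euclidean_space \<Rightarrow> 'b::euclidean_space \<Rightarrow> 'a"
  assumes der: "\<And>x p. ((\<lambda>y. f y p) has_derivative blinfun_apply (D (x, p))) (at x)"
    and cont: "continuous_on UNIV D"
    and no_fixed: "\<And>v. D (x0, p0) v = v \<Longrightarrow> v = 0"
  obtains r C where "r > 0"
    and "\<And>x p. dist p p0 < r \<Longrightarrow> dist x x0 \<le> r \<Longrightarrow> f x p = x \<Longrightarrow>
           dist x x0 \<le> C * dist (f x0 p) x0"
proof -
  obtain m where m: "m > 0" "\<And>v. m * norm v \<le> norm (v - D (x0, p0) v)"
    using id_minus_blinfun_bounded_below[OF no_fixed] by blast
  obtain r where "r > 0" and lin: "\<And>x p q e. (x, p) \<in> {(x0, p0)} \<Longrightarrow> dist q p < r \<Longrightarrow>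
      norm e \<le> r \<Longrightarrow> norm (f (x + e) q - f x q - D (x, p) e) \<le> m / 2 * norm e"
    using uniform_partial_linearization[OF der cont compact_sing half_gt_zero[OF m(1)]] by blast
  have "dist x x0 \<le> 2 / m * dist (f x0 p) x0"
    if "dist p p0 < r" "dist x x0 \<le> r" "f x p = x" for x p
  proof -
    have "norm (f (x0 + (x - x0)) p - f x0 p - D (x0, p0) (x - x0)) \<le> m / 2 * norm (x - x0)"
      using that by (intro lin) (auto simp: dist_norm)
    moreover have "f (x0 + (x - x0)) p = x0 + (x - x0)" using that(3) by simp
    ultimately have "norm (x - x0) \<le> 2 / m * norm (f x0 p - x0)"
      by (rule fixed_point_displacement_bound[where g="\<lambda>y. f y p", OF m])
    then show ?thesis by (simp add: dist_norm)
  qed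
  with \<open>r > 0\<close> show thesis using that by blast
qed

lemma fixed_point_path_continuous:
  fixes f :: "'a::euclidean_space \<Rightarrow> 'b::euclidean_space \<Rightarrow> 'a"
    and X :: "real \<Rightarrow> 'a" and \<Lambda> :: "real \<Rightarrow> 'b"
  assumes der: "\<And>x p. ((\<lambda>y. f y p) has_derivative blinfun_apply (D (x, p))) (at x)"
    and cont_D: "continuous_on UNIV D"
    and cont_f: "continuous_on UNIV (\<lambda>(x, p). f x p)"
    and cont_\<Lambda>: "continuous_on UNIV \<Lambda>"
    and fixed: "\<And>s. f (X s) (\<Lambda> s) = X s"
    and conn: "connected (range (\<lambda>s. (s, X s)))"
    and no_fixed: "\<And>s v. D (X s, \<Lambda> s) v = v \<Longrightarrow> v = 0"
  shows "continuous_on UNIV X"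
proof -
  have "isCont X s0" for s0
  proof -
    obtain r C where "r > 0" and near: "\<And>x p. dist p (\<Lambda> s0) < r \<Longrightarrow> dist x (X s0) \<le> r \<Longrightarrow>
        f x p = x \<Longrightarrow> dist x (X s0) \<le> C * dist (f (X s0) p) (X s0)"
      using fixed_points_near_nondegenerate_fixed_point[OF der cont_D no_fixed[of s0]] by blast
    have "continuous_on UNIV ((\<lambda>(x, p). f x p) \<circ> (\<lambda>s. (X s0, \<Lambda> s)))"
      by (intro continuous_on_compose continuous_intros cont_\<Lambda> continuous_on_subset[OF cont_f]) auto
    then have "((\<lambda>s. f (X s0) (\<Lambda> s)) \<longlongrightarrow> f (X s0) (\<Lambda> s0)) (at s0)"
      by (simp add: continuous_on_eq_continuous_at isCont_def o_def)
    then have "((\<lambda>s. C * dist (f (X s0) (\<Lambda> s)) (X s0))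
        \<longlongrightarrow> C * dist (f (X s0) (\<Lambda> s0)) (X s0)) (at s0)"
      by (intro tendsto_intros)
    then have \<phi>: "((\<lambda>s. C * dist (f (X s0) (\<Lambda> s)) (X s0)) \<longlongrightarrow> 0) (at s0)"
      using fixed[of s0] by simp
    have "(\<Lambda> \<longlongrightarrow> \<Lambda> s0) (at s0)"
      using cont_\<Lambda> by (simp add: continuous_on_eq_continuous_at isCont_def)
    then have "\<forall>\<^sub>F s in at s0. dist (\<Lambda> s) (\<Lambda> s0) < r"
      using \<open>r > 0\<close> by (rule tendstoD)
    then have "\<forall>\<^sub>F s in at s0.
        dist (X s) (X s0) \<le> r \<longrightarrow> dist (X s) (X s0) \<le> C * dist (f (X s0) (\<Lambda> s)) (X s0)"
      by eventually_elim (use near fixed in blast)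
    with conn \<open>r > 0\<close> \<phi> show "isCont X s0" by (rule isCont_if_connected_graph)
  qed
  then show ?thesis by (simp add: continuous_at_imp_continuous_on)
qed

lemma bounded_linear_funpow:
  fixes A :: "'a::real_normed_vector \<Rightarrow> 'a"
  assumes "bounded_linear A"
  shows "bounded_linear (A ^^ n)"
proof (induction n)
  case 0
  show ?case by (simp add: bounded_linear_ident[unfolded id_def] id_def)
next
  case (Suc n)
  show ?case unfolding funpow.simps o_def by (rule bounded_linear_compose[OF assms Suc.IH])
qed

lemma fixed_vector_eq_0_if_onorm_funpow_less_1:
  fixes A :: "'a::real_normed_vector \<Rightarrow> 'a"
  assumes A: "bounded_linear A" and small: "onorm (A ^^ n) < 1" and fixed: "A v = v"
  shows "v = 0"
proof -
  have "(A ^^ n) v = v" using fixed by (induction n) auto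
  then have "norm v \<le> onorm (A ^^ n) * norm v"
    using onorm[OF bounded_linear_funpow[OF A], of n v] by simp
  then have "(1 - onorm (A ^^ n)) * norm v \<le> 0" by (simp add: algebra_simps)
  with small have "norm v \<le> 0" by (simp add: mult_le_0_iff)
  then show ?thesis by simp
qed

lemma iterate_displacement_bound:
  fixes g :: "'a::real_normed_vector \<Rightarrow> 'a" and A :: "'a \<Rightarrow>\<^sub>L 'a"
  assumes lin: "\<forall>e. norm e \<le> r \<longrightarrow> norm (g (x0 + e) - x0 - A e) \<le> \<kappa> * norm e"
    and A: "norm A \<le> B" and \<kappa>: "\<kappa> \<le> 1"
  shows "norm v * (B + 1) ^ k \<le> r \<Longrightarrow> norm ((g ^^ k) (x0 + v) - x0) \<le> (B + 1) ^ k * norm v"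
proof (induction k)
  case (Suc k)
  have B: "B \<ge> 0" using A norm_ge_zero order_trans by blast
  define e where "e = (g ^^ k) (x0 + v) - x0"
  have "norm v * (B + 1) ^ k \<le> norm v * (B + 1) ^ Suc k"
    using B by (intro mult_left_mono) auto
  with Suc.prems have v: "norm v * (B + 1) ^ k \<le> r" by linarith
  with Suc.IH have IH: "norm e \<le> (B + 1) ^ k * norm v" unfolding e_def by blast
  with v have "norm e \<le> r" by (simp add: mult.commute)
  have "norm ((g ^^ Suc k) (x0 + v) - x0) \<le> norm (A e) + norm (g (x0 + e) - x0 - A e)"
    using norm_triangle_ineq[of "A e" "g (x0 + e) - x0 - A e"] by (simp add: e_def)
  also have "\<dots> \<le> B * norm e + 1 * norm e"
    using lin \<open>norm e \<le> r\<close> mult_right_mono[OF \<kappa> norm_ge_zero[of e]]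
      order_trans[OF norm_blinfun mult_right_mono[OF A norm_ge_zero]] by (intro add_mono) auto
  also have "\<dots> = (B + 1) * norm e"
    by (simp add: algebra_simps)
  also have "\<dots> \<le> (B + 1) * ((B + 1) ^ k * norm v)"
    using IH B by (intro mult_left_mono) auto
  finally show ?case by simp
qed simp

lemma iterate_linearization_error:
  fixes g :: "'a::real_normed_vector \<Rightarrow> 'a" and A :: "'a \<Rightarrow>\<^sub>L 'a"
  assumes lin: "\<forall>e. norm e \<le> r \<longrightarrow> norm (g (x0 + e) - x0 - A e) \<le> \<kappa> * norm e"
    and A: "norm A \<le> B" and \<kappa>: "0 \<le> \<kappa>" "\<kappa> \<le> 1"
  shows "norm v * (B + 1) ^ k \<le> r \<Longrightarrow>
    norm ((g ^^ k) (x0 + v) - x0 - (blinfun_apply A ^^ k) v) \<le> \<kappa> * real k * (B + 1) ^ k * norm v"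
proof (induction k)
  case (Suc k)
  have B: "B \<ge> 0" using A norm_ge_zero order_trans by blast
  define e where "e = (g ^^ k) (x0 + v) - x0"
  define w where "w = e - (blinfun_apply A ^^ k) v"
  have "norm v * (B + 1) ^ k \<le> norm v * (B + 1) ^ Suc k"
    using B by (intro mult_left_mono) auto
  with Suc.prems have v: "norm v * (B + 1) ^ k \<le> r" by linarith
  then have e: "norm e \<le> (B + 1) ^ k * norm v"
    unfolding e_def by (rule iterate_displacement_bound[OF lin A \<kappa>(2)])
  with v have "norm e \<le> r" by (simp add: mult.commute)
  have step: "(g ^^ Suc k) (x0 + v) - x0 - (blinfun_apply A ^^ Suc k) v = A w + (g (x0 + e) - x0 - A e)"
    by (simp add: e_def w_def blinfun.diff_right)
  have "norm (g (x0 + e) - x0 - A e) \<le> \<kappa> * norm e"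
    using lin \<open>norm e \<le> r\<close> by blast
  moreover have "norm (A w) \<le> B * norm w"
    by (rule order_trans[OF norm_blinfun mult_right_mono[OF A norm_ge_zero]])
  ultimately have "norm ((g ^^ Suc k) (x0 + v) - x0 - (blinfun_apply A ^^ Suc k) v)
      \<le> B * norm w + \<kappa> * norm e"
    unfolding step using norm_triangle_ineq[of "A w" "g (x0 + e) - x0 - A e"] by linarith
  also have "\<dots> \<le> B * (\<kappa> * real k * (B + 1) ^ k * norm v) + \<kappa> * ((B + 1) ^ k * norm v)"
    using Suc.IH[OF v] e B \<kappa>(1) unfolding w_def e_def by (intro add_mono mult_left_mono) auto
  also have "\<dots> \<le> \<kappa> * real (Suc k) * (B + 1) ^ Suc k * norm v"
  proof -
    have "B * real k + 1 \<le> real (Suc k) * (B + 1)" using B by (simp add: algebra_simps)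
    then have "\<kappa> * ((B + 1) ^ k * norm v) * (B * real k + 1)
        \<le> \<kappa> * ((B + 1) ^ k * norm v) * (real (Suc k) * (B + 1))"
      using B \<kappa>(1) by (intro mult_left_mono) auto
    then show ?thesis by (simp add: algebra_simps)
  qed
  finally show ?case .
qed simp

lemma uniformly_linearizable_iterates_contract:
  fixes g :: "'i \<Rightarrow> 'a::real_normed_vector \<Rightarrow> 'a" and x :: "'i \<Rightarrow> 'a"
    and A :: "'i \<Rightarrow> 'a \<Rightarrow>\<^sub>L 'a"
  assumes lin: "\<And>\<kappa>. \<kappa> > 0 \<Longrightarrow>
      \<exists>r>0. \<forall>i e. norm e \<le> r \<longrightarrow> norm (g i (x i + e) - x i - A i e) \<le> \<kappa> * norm e"
    and A: "\<And>i. norm (A i) \<le> B"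
    and contr: "\<And>i n. N \<le> n \<Longrightarrow> n \<le> M \<Longrightarrow> onorm (blinfun_apply (A i) ^^ n) \<le> 1 / 4"
  obtains \<epsilon>0 where "\<epsilon>0 > 0"
    and "\<And>i n v. N \<le> n \<Longrightarrow> n \<le> M \<Longrightarrow> norm v \<le> \<epsilon>0 \<Longrightarrow>
           norm ((g i ^^ n) (x i + v) - x i) \<le> norm v / 3"
proof -
  have B: "B \<ge> 0" using A norm_ge_zero order_trans by blast
  define C where "C = (real M + 1) * (B + 1) ^ M"
  have "C \<ge> 1" unfolding C_def using B by (intro mult_ge1_I) auto
  \<comment> \<open>chosen so that the linearisation error after \<open>n \<le> M\<close> steps is at most \<open>|v| / 12\<close>\<close>
  define \<kappa> where "\<kappa> = 1 / (12 * C)"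
  have \<kappa>: "\<kappa> > 0" "\<kappa> \<le> 1" "\<kappa> * C = 1 / 12" using \<open>C \<ge> 1\<close> by (auto simp: \<kappa>_def)
  obtain r where "r > 0" and r: "\<forall>i e. norm e \<le> r \<longrightarrow>
      norm (g i (x i + e) - x i - A i e) \<le> \<kappa> * norm e"
    using lin[OF \<kappa>(1)] by blast
  show thesis
  proof (rule that)
    show "r / (B + 1) ^ M > 0" using \<open>r > 0\<close> B by simp
    fix i n and v :: 'a assume n: "N \<le> n" "n \<le> M" and v: "norm v \<le> r / (B + 1) ^ M"
    have pow: "(B + 1) ^ n \<le> (B + 1) ^ M" using n B by (intro power_increasing) auto
    have "norm v * (B + 1) ^ n \<le> r / (B + 1) ^ M * (B + 1) ^ M"
      using v pow B \<open>r > 0\<close> by (intro mult_mono) auto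
    then have "norm v * (B + 1) ^ n \<le> r" using B by simp
    with iterate_linearization_error[OF spec[OF r, of i] A less_imp_le[OF \<kappa>(1)] \<kappa>(2)]
    have "norm ((g i ^^ n) (x i + v) - x i - (blinfun_apply (A i) ^^ n) v)
        \<le> \<kappa> * (real n * (B + 1) ^ n) * norm v"
      by (simp add: mult.assoc)
    also have "\<dots> \<le> \<kappa> * C * norm v"
      unfolding C_def using n pow B \<kappa>(1) by (intro mult_right_mono mult_left_mono mult_mono) auto
    finally have err: "norm ((g i ^^ n) (x i + v) - x i - (blinfun_apply (A i) ^^ n) v) \<le> norm v / 12"
      using \<kappa>(3) by simp
    have "norm ((blinfun_apply (A i) ^^ n) v) \<le> onorm (blinfun_apply (A i) ^^ n) * norm v"
      by (intro onorm bounded_linear_funpow blinfun.bounded_linear_right)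
    also have "\<dots> \<le> norm v / 4"
      using mult_right_mono[OF contr[OF n, of i] norm_ge_zero[of v]] by simp
    finally show "norm ((g i ^^ n) (x i + v) - x i) \<le> norm v / 3"
      using err norm_triangle_sub[of "(g i ^^ n) (x i + v) - x i" "(blinfun_apply (A i) ^^ n) v"]
      by linarith
  qed
qed

lemma iterates_contract_near_bounded_fixed_points:
  fixes f :: "'a::euclidean_space \<Rightarrow> 'b::euclidean_space \<Rightarrow> 'a"
    and x :: "'i \<Rightarrow> 'a" and p :: "'i \<Rightarrow> 'b"
  assumes der: "\<And>x p. ((\<lambda>y. f y p) has_derivative blinfun_apply (D (x, p))) (at x)"
    and cont: "continuous_on UNIV D"
    and bdd: "bounded (range (\<lambda>i. (x i, p i)))"
    and fixed: "\<And>i. f (x i) (p i) = x i"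
    and contr: "\<And>i n. N \<le> n \<Longrightarrow> n \<le> M \<Longrightarrow> onorm (blinfun_apply (D (x i, p i)) ^^ n) \<le> 1 / 4"
  obtains \<epsilon>0 where "\<epsilon>0 > 0"
    and "\<And>i n v. N \<le> n \<Longrightarrow> n \<le> M \<Longrightarrow> norm v \<le> \<epsilon>0 \<Longrightarrow>
           norm (((\<lambda>y. f y (p i)) ^^ n) (x i + v) - x i) \<le> norm v / 3"
proof -
  have "bounded (D ` closure (range (\<lambda>i. (x i, p i))))"
    using bdd by (intro compact_imp_bounded compact_continuous_image continuous_on_subset[OF cont])
      (auto simp: compact_closure)
  then obtain B where "\<forall>z \<in> D ` closure (range (\<lambda>i. (x i, p i))). norm z \<le> B"
    unfolding bounded_iff by blast
  then have B: "norm (D (x i, p i)) \<le> B" for i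
    using closure_subset[of "range (\<lambda>i. (x i, p i))"] by blast
  from uniformly_linearizable_iterates_contract[where g="\<lambda>i y. f y (p i)",
      OF uniform_linearization_at_fixed_points[OF der cont bdd fixed] B contr]
  show thesis using that by blast
qed

lemma Fmap_0_funpow: "(Fmap f \<Lambda> 0 ^^ n) (s, x) = (s, ((\<lambda>y. f y (\<Lambda> s)) ^^ n) x)"
  by (induction n) (auto simp: Fmap_def)

lemma Fmap_0_funpow_nbhd_subset:
  assumes "\<And>s v. norm v \<le> \<epsilon> \<Longrightarrow> norm (((\<lambda>y. f y (\<Lambda> s)) ^^ n) (X s + v) - X s) \<le> norm v / 3"
  shows "(Fmap f \<Lambda> 0 ^^ n) ` nbhd X \<epsilon> \<subseteq> nbhd X (\<epsilon> / 3)"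
proof (rule image_subsetI)
  fix z assume "z \<in> nbhd X \<epsilon>"
  then obtain s x where z: "z = (s, x)" and x: "norm (x - X s) \<le> \<epsilon>"
    by (auto simp: nbhd_def)
  then have "norm (((\<lambda>y. f y (\<Lambda> s)) ^^ n) (X s + (x - X s)) - X s) \<le> norm (x - X s) / 3"
    by (intro assms)
  with x show "(Fmap f \<Lambda> 0 ^^ n) z \<in> nbhd X (\<epsilon> / 3)"
    by (simp add: z Fmap_0_funpow nbhd_def)
qed

lemma stable_path_bounded:
  fixes f :: "real^'l \<Rightarrow> real^'m \<Rightarrow> real^'l"
  assumes der: "\<And>x p. ((\<lambda>y. f y p) has_derivative blinfun_apply (D (x, p))) (at x)"
    and cont_D: "continuous_on UNIV D"
    and cont_f: "continuous_on UNIV (\<lambda>(x, p). f x p)"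
    and shift: "parameter_shift \<Lambda> lm lp"
    and path: "stable_path f \<Lambda> lm lp X Xm Xp"
    and no_fixed: "\<And>s v. D (X s, \<Lambda> s) v = v \<Longrightarrow> v = 0"
  shows "bounded (range (\<lambda>s. (X s, \<Lambda> s)))"
proof -
  have cont_\<Lambda>: "continuous_on UNIV \<Lambda>" and \<Lambda>_lim: "(\<Lambda> \<longlongrightarrow> lm) at_bot" "(\<Lambda> \<longlongrightarrow> lp) at_top"
    using shift C1_differentiable_imp_continuous_on unfolding parameter_shift_def by auto
  have "{(s, X s) | s. True} = range (\<lambda>s. (s, X s))" by auto
  then have fixed: "\<And>s. f (X s) (\<Lambda> s) = X s" and conn: "connected (range (\<lambda>s. (s, X s)))"
    and X_lim: "(X \<longlongrightarrow> Xm) at_bot" "(X \<longlongrightarrow> Xp) at_top"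
    using path unfolding stable_path_def by auto
  have "continuous_on UNIV X"
    by (rule fixed_point_path_continuous[OF der cont_D cont_f cont_\<Lambda> fixed conn no_fixed])
  then show ?thesis
    by (intro bounded_range_if_tendsto_at_bot_at_top[where a="(Xm, lm)" and b="(Xp, lp)"])
      (auto intro!: continuous_intros tendsto_Pair X_lim \<Lambda>_lim cont_\<Lambda>)
qed

theorem mainTheorem11:
  fixes f :: "real^'l \<Rightarrow> real^'m \<Rightarrow> real^'l"
    and \<Lambda> :: "real \<Rightarrow> real^'m" and lm lp :: "real^'m"
    and X :: "real \<Rightarrow> real^'l" and Xm Xp :: "real^'l"
    and N :: nat
  assumes "C1_joint f"
    and "parameter_shift \<Lambda> lm lp"
    and "stable_path f \<Lambda> lm lp X Xm Xp"
    and "\<forall>s n. n \<ge> N \<longrightarrow> onorm ((Dx f (X s) (\<Lambda> s)) ^^ n) < 1/4"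
  shows "\<exists>\<epsilon>0>0. \<forall>\<epsilon>. 0 < \<epsilon> \<and> \<epsilon> < \<epsilon>0 \<longrightarrow>
           (\<forall>n \<in> {N .. N * (N + 1)}. (Fmap f \<Lambda> 0 ^^ n) ` nbhd X \<epsilon> \<subseteq> nbhd X (\<epsilon> / 3))"
proof -
  obtain D :: "(real^'l) \<times> (real^'m) \<Rightarrow> (real^'l) \<Rightarrow>\<^sub>L (real^'l)" where
    der: "\<And>x p. ((\<lambda>y. f y p) has_derivative blinfun_apply (D (x, p))) (at x)"
    and Dx_eq: "\<And>x p. Dx f x p = blinfun_apply (D (x, p))"
    and cont_D: "continuous_on UNIV D" and cont_f: "continuous_on UNIV (\<lambda>(x, p). f x p)"
    using C1_joint_partial_derivative[OF assms(1)] by blast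
  have contr: "onorm (blinfun_apply (D (X s, \<Lambda> s)) ^^ n) \<le> 1/4" if "N \<le> n" for s n
    using assms(4) that by (simp add: Dx_eq less_imp_le)
  have no_fixed: "v = 0" if "D (X s, \<Lambda> s) v = v" for s v
    using contr[of N s] that
    by (intro fixed_vector_eq_0_if_onorm_funpow_less_1[where n=N, OF blinfun.bounded_linear_right]) auto
  have fixed: "\<And>s. f (X s) (\<Lambda> s) = X s"
    using assms(3) unfolding stable_path_def by blast
  have "bounded (range (\<lambda>s. (X s, \<Lambda> s)))"
    by (rule stable_path_bounded[OF der cont_D cont_f assms(2,3) no_fixed])
  from iterates_contract_near_bounded_fixed_points[OF der cont_D this fixed, where M="N * (N + 1)"] contr
  obtain \<epsilon>0 where "\<epsilon>0 > 0" and contract: "\<And>s n v. N \<le> n \<Longrightarrow> n \<le> N * (N + 1) \<Longrightarrow>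
      norm v \<le> \<epsilon>0 \<Longrightarrow> norm (((\<lambda>y. f y (\<Lambda> s)) ^^ n) (X s + v) - X s) \<le> norm v / 3"
    by blast
  show ?thesis
  proof (intro exI[of _ \<epsilon>0] conjI allI impI ballI Fmap_0_funpow_nbhd_subset)
    fix \<epsilon> n s and v :: "real^'l"
    assume "0 < \<epsilon> \<and> \<epsilon> < \<epsilon>0" "n \<in> {N .. N * (N + 1)}" "norm v \<le> \<epsilon>"
    then show "norm (((\<lambda>y. f y (\<Lambda> s)) ^^ n) (X s + v) - X s) \<le> norm v / 3"
      by (intro contract) auto
  qed (fact \<open>\<epsilon>0 > 0\<close>)
qed

end
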